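(* For every constant $c>0$, with $\Phi\in\Omega(n,\lfloor c2^n\rfloor)$, \[e^{-c}-o(1)\le\Pr[\Phi\text{ is satisfiable}]\le\frac{e^{-c/4}}{1-e^{-c/4}}+o(1)\qquad(n\to\infty).\]
   Context: A Horn clause is a disjunction of literals with at most one positive literal. $\mathcal H_n$ is the set of pairs $(P,S)$ with $P\in\{\emptyset,\{1\},\dots,\{n\}\}$, $S\subseteq\{1,\dots,n\}$, $(P,S)\ne(\emptyset,\emptyset)$, representing the Horn clause $\bigvee_{i\in P}x_i\vee\bigvee_{j\in S}\neg x_j$ (so $|\mathcal H_n|\sim n2^n$; the paper writes this number as $(n+2)2^n-1$); $\Omega(n,m)$ is the distribution of the conjunction of $m$ clauses drawn independently, uniformly with repetition from $\mathcal H_n$. *)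

theory Defs
  imports Complex_Main
begin

text \<open>A Horn clause over variables 1..n is a pair (P,S) with P either empty (None)
  or a singleton {i} (Some i), S a subset of {1..n}, and (P,S) different from (empty,empty).
  It represents the disjunction of x_i (i in P) and of not x_j (j in S).\<close>

type_synonym horn_clause = "nat option \<times> nat set"

definition horn_clauses :: "nat \<Rightarrow> horn_clause set" where
  "horn_clauses n = {(P, S). (P = None \<or> (\<exists>i\<in>{1..n}. P = Some i)) \<and> S \<subseteq> {1..n}
                        \<and> (P, S) \<noteq> (None, {})}"

text \<open>Truth assignments are given by the set A of variables set to true.\<close>
definition clause_sat :: "nat set \<Rightarrow> horn_clause \<Rightarrow> bool" where
  "clause_sat A C = ((\<exists>i. fst C = Some i \<and> i \<in> A) \<or> (\<exists>j\<in>snd C. j \<notin> A))"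

definition formula_satisfiable :: "nat \<Rightarrow> horn_clause list \<Rightarrow> bool" where
  "formula_satisfiable n cs = (\<exists>A\<subseteq>{1..n}. \<forall>C\<in>set cs. clause_sat A C)"

text \<open>Omega(n,m): m clauses drawn independently and uniformly with repetition from H_n,
  i.e. the uniform distribution on length-m lists of elements of H_n.\<close>
definition horn_formulas :: "nat \<Rightarrow> nat \<Rightarrow> horn_clause list set" where
  "horn_formulas n m = {cs. length cs = m \<and> set cs \<subseteq> horn_clauses n}"

definition prob_sat :: "nat \<Rightarrow> nat \<Rightarrow> real" where
  "prob_sat n m = real (card {cs \<in> horn_formulas n m. formula_satisfiable n cs})
                   / real (card (horn_formulas n m))"

end

theory Submission
  imports Defs "HOL-Real_Asymp.Real_Asymp"
begin

text \<open>
  Lower bound: a formula without positive unit clauses is satisfied by the all-false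
  assignment. A random clause is a positive unit clause with probability n / |H_n|, which is
  about 2^(-n), so the formula is satisfiable with probability at least (1 - n / |H_n|)^m,
  and this tends to e^(-c).

  Upper bound: a satisfiable Horn formula has a minimal model M, and every i in M is forced by
  a clause x_i or not S of the formula with S a subset of M - {i}. For |M| = k the formula
  must contain k such clauses, at most (m choose k) (k 2^(k-1))^k choices, while all its
  other clauses avoid the b_k, roughly (n - k + 1) 2^k, clauses falsified by M. Summed over
  the (n choose k) sets M, size k contributes at most (c k 2^(k-1))^k e^(-c b_k / n), which is
  at most e^(-c(k+1)/4) once e^(c/4) >= 2; the geometric series gives the bound. For smaller
  c the claimed upper bound exceeds 1.
\<close>

lemma card_lists_nth_in:
  assumes "\<And>p. p < m \<Longrightarrow> finite (A p)"
  shows "card {xs. length xs = m \<and> (\<forall>p<m. xs ! p \<in> A p)} = (\<Prod>p<m. card (A p))"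
  using assms
proof (induction m arbitrary: A)
  case 0
  then show ?case
    by simp
next
  case (Suc m)
  let ?tails = "{xs. length xs = m \<and> (\<forall>p<m. xs ! p \<in> A (Suc p))}"
  have "{xs. length xs = Suc m \<and> (\<forall>p<Suc m. xs ! p \<in> A p)} = (\<lambda>(x, xs). x # xs) ` (A 0 \<times> ?tails)"
    (is "?lists = _")
  proof (intro set_eqI iffI)
    fix xs assume "xs \<in> ?lists"
    then obtain y ys where "xs = y # ys" "length ys = m" "\<forall>p<Suc m. xs ! p \<in> A p"
      by (cases xs) auto
    then show "xs \<in> (\<lambda>(x, xs). x # xs) ` (A 0 \<times> ?tails)"
      by (auto intro!: image_eqI[where x = "(y, ys)"])
  qed (auto simp: less_Suc_eq_0_disj)
  then have "card {xs. length xs = Suc m \<and> (\<forall>p<Suc m. xs ! p \<in> A p)} = card (A 0) * card ?tails"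
    by (simp add: card_image inj_on_def card_cartesian_product)
  with Suc show ?case
    by (simp del: prod.lessThan_Suc add: prod.lessThan_Suc_shift)
qed

lemma card_lists_positions:
  assumes fin: "finite T" "finite G" and P: "P \<subseteq> {..<m}"
  shows "card {xs. length xs = m \<and> (\<forall>p<m. xs ! p \<in> (if p \<in> P then T else G))}
           = card T ^ card P * card G ^ (m - card P)"
proof -
  have "card {xs. length xs = m \<and> (\<forall>p<m. xs ! p \<in> (if p \<in> P then T else G))}
          = (\<Prod>p<m. if p \<in> P then card T else card G)"
    using fin by (subst card_lists_nth_in) (auto intro: prod.cong)
  also have "\<dots> = card T ^ card P * card G ^ card ({..<m} - P)"
    using P by (simp add: prod.If_cases Int_absorb1 Diff_eq)
  also have "card ({..<m} - P) = m - card P"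
    using P by (simp add: card_Diff_subset finite_subset)
  finally show ?thesis .
qed

lemma card_lists_covering_le:
  fixes f :: "'a \<Rightarrow> 'b"
  assumes fin: "finite T" "finite G" "finite M"
  shows "card {xs. length xs = m \<and> set xs \<subseteq> G \<and> (\<forall>i\<in>M. \<exists>x\<in>set xs. x \<in> T \<and> f x = i)}
           \<le> (m choose card M) * card T ^ card M * card G ^ (m - card M)"
proof -
  define L where "L P = {xs. length xs = m \<and> (\<forall>p<m. xs ! p \<in> (if p \<in> P then T else G))}" for P
  define Ps where "Ps = {P. P \<subseteq> {..<m} \<and> card P = card M}"
  have cover: "{xs. length xs = m \<and> set xs \<subseteq> G \<and> (\<forall>i\<in>M. \<exists>x\<in>set xs. x \<in> T \<and> f x = i)}
                 \<subseteq> (\<Union>P\<in>Ps. L P)"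
  proof
    fix xs assume "xs \<in> {xs. length xs = m \<and> set xs \<subseteq> G \<and> (\<forall>i\<in>M. \<exists>x\<in>set xs. x \<in> T \<and> f x = i)}"
    then have len: "length xs = m" and G: "set xs \<subseteq> G"
      and hit: "\<forall>i\<in>M. \<exists>x\<in>set xs. x \<in> T \<and> f x = i"
      by auto
    have "\<forall>i\<in>M. \<exists>p. p < m \<and> xs ! p \<in> T \<and> f (xs ! p) = i"
      using hit len by (metis in_set_conv_nth)
    then obtain pos where pos: "\<And>i. i \<in> M \<Longrightarrow> pos i < m \<and> xs ! pos i \<in> T \<and> f (xs ! pos i) = i"
      by metis
    have "inj_on pos M"
      by (rule inj_onI) (metis pos)
    then have "pos ` M \<in> Ps"
      unfolding Ps_def using pos by (auto simp: card_image)
    moreover have "xs \<in> L (pos ` M)"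
      unfolding L_def using len G pos by auto
    ultimately show "xs \<in> (\<Union>P\<in>Ps. L P)"
      by blast
  qed
  have fin_L: "finite (L P)" for P
  proof (rule finite_subset)
    show "L P \<subseteq> {xs. set xs \<subseteq> T \<union> G \<and> length xs = m}"
      unfolding L_def by (auto simp: in_set_conv_nth split: if_splits)
    show "finite {xs. set xs \<subseteq> T \<union> G \<and> length xs = m}"
      using fin by (simp add: finite_lists_length_eq)
  qed
  have fin_Ps: "finite Ps"
    unfolding Ps_def by (rule finite_subset[of _ "Pow {..<m}"]) auto
  have "card {xs. length xs = m \<and> set xs \<subseteq> G \<and> (\<forall>i\<in>M. \<exists>x\<in>set xs. x \<in> T \<and> f x = i)}
          \<le> card (\<Union>P\<in>Ps. L P)"
    using cover fin_L fin_Ps by (intro card_mono) auto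
  also have "\<dots> \<le> (\<Sum>P\<in>Ps. card (L P))"
    using fin_Ps by (rule card_UN_le)
  also have "\<dots> = card Ps * (card T ^ card M * card G ^ (m - card M))"
    unfolding L_def Ps_def using fin by (simp add: card_lists_positions)
  also have "card Ps = m choose card M"
    unfolding Ps_def using n_subsets[of "{..<m}" "card M"] by simp
  finally show ?thesis
    by (simp add: mult.assoc)
qed

lemma sum_Pow_card:
  assumes "finite A"
  shows "(\<Sum>B\<in>Pow A. g (card B)) = (\<Sum>k\<le>card A. of_nat (card A choose k) * g k)"
proof -
  have "(\<Sum>B\<in>Pow A. g (card B)) = (\<Sum>k\<le>card A. \<Sum>B\<in>{B \<in> Pow A. card B = k}. g (card B))"
    using assms by (intro sum.group[symmetric]) (auto intro: card_mono)
  also have "\<dots> = (\<Sum>k\<le>card A. of_nat (card A choose k) * g k)"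
  proof (rule sum.cong)
    fix k
    have "card {B \<in> Pow A. card B = k} = card A choose k"
      using n_subsets[OF assms, of k] by (simp add: Collect_conj_eq Pow_def)
    then show "(\<Sum>B\<in>{B \<in> Pow A. card B = k}. g (card B)) = of_nat (card A choose k) * g k"
      by simp
  qed simp
  finally show ?thesis .
qed

lemma binomial_term_le:
  fixes N b c T :: real
  assumes N: "0 < N" and b: "0 \<le> b" "b \<le> N" and km: "k \<le> m"
    and nm: "real n * real m \<le> c * N" and T: "0 \<le> T"
  shows "real (n choose k) * real (m choose k) * T ^ k * (N - b) ^ (m - k) / N ^ m
           \<le> (c * T) ^ k * exp (- (b * (real m - real k) / N))"
proof -
  have "0 \<le> c * N"
    using nm by (rule order_trans[rotated]) simp
  then have c: "0 \<le> c"
    using N by (simp add: zero_le_mult_iff)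
  have choose_le: "real (a choose k) \<le> real a ^ k" for a
  proof -
    have "a choose k \<le> a ^ k"
      by (cases "k \<le> a") (simp_all add: binomial_le_pow binomial_eq_0)
    then show ?thesis
      by (metis of_nat_le_iff of_nat_power)
  qed
  have "real (n choose k) * real (m choose k) * T ^ k * (N - b) ^ (m - k) / N ^ m
          \<le> real n ^ k * real m ^ k * T ^ k * (N - b) ^ (m - k) / N ^ m"
    using b T by (intro divide_right_mono mult_right_mono mult_mono choose_le) auto
  also have "\<dots> = (real n * real m / N * T) ^ k * ((N - b) / N) ^ (m - k)"
  proof -
    have "N ^ m = N ^ k * N ^ (m - k)"
      using km by (simp flip: power_add)
    then show ?thesis
      by (simp add: power_mult_distrib power_divide)
  qed
  also have "\<dots> \<le> (c * T) ^ k * exp (- b / N) ^ (m - k)"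
  proof (rule mult_mono)
    have "real n * real m / N \<le> c"
      using nm N by (simp add: divide_le_eq)
    then show "(real n * real m / N * T) ^ k \<le> (c * T) ^ k"
      using N T by (intro power_mono mult_right_mono) auto
    have "1 + (- b / N) \<le> exp (- b / N)"
      by (rule exp_ge_add_one_self)
    then show "((N - b) / N) ^ (m - k) \<le> exp (- b / N) ^ (m - k)"
      using N b by (intro power_mono) (simp_all add: diff_divide_distrib)
  qed (use N b T c in auto)
  also have "exp (- b / N) ^ (m - k) = exp (- (b * (real m - real k) / N))"
    using km by (simp flip: exp_of_nat_mult add: of_nat_diff)
  finally show ?thesis .
qed

lemma sum_power_Suc_le:
  fixes x :: real
  assumes "0 \<le> x" "x < 1"
  shows "(\<Sum>k\<le>n. x ^ (k + 1)) \<le> x / (1 - x)"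
proof -
  have "(\<Sum>k\<le>n. x ^ (k + 1)) = x * (1 - x ^ Suc n) / (1 - x)"
    using assms by (simp add: sum_distrib_left[symmetric] sum_gp0 mult.commute)
  also have "\<dots> \<le> x / (1 - x)"
    using assms by (simp add: divide_right_mono mult_left_le)
  finally show ?thesis .
qed

lemma le_exp_half: "c \<le> exp (c / 2)" for c :: real
proof (cases "c \<le> 0")
  case True
  then show ?thesis
    using exp_gt_zero[of "c / 2"] by linarith
next
  case False
  have "c \<le> (1 + c / 4) ^ 2"
    using zero_le_power2[of "1 - c / 4"] by (simp add: power2_eq_square algebra_simps)
  also have "\<dots> \<le> exp (c / 4) ^ 2"
    using False by (intro power_mono exp_ge_add_one_self) auto
  also have "\<dots> = exp (c / 2)"
    by (simp flip: exp_of_nat_mult)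
  finally show ?thesis .
qed

lemma mult_power2_le_exp:
  fixes c :: real
  assumes four: "4 \<le> exp (c / 2)" and c: "0 \<le> c"
  shows "c * real k * 2 ^ (k - 1) \<le> exp (c * real k / 2)"
proof (cases k)
  case 0
  then show ?thesis
    by simp
next
  case (Suc j)
  have "real k \<le> 2 ^ j"
    using less_exp[of j] Suc by (metis Suc_leI of_nat_le_iff of_nat_numeral of_nat_power)
  then have "real k * 2 ^ j \<le> 2 ^ j * 2 ^ j"
    by (intro mult_right_mono) auto
  also have "\<dots> = 4 ^ j"
    by (simp flip: power_mult_distrib)
  finally have "c * (real k * 2 ^ j) \<le> exp (c / 2) * 4 ^ j"
    using c le_exp_half[of c] by (intro mult_mono) auto
  then have "c * real k * 2 ^ (k - 1) \<le> exp (c / 2) * 4 ^ j"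
    using Suc by (simp add: mult.assoc)
  also have "\<dots> \<le> exp (c / 2) * exp (c / 2) ^ j"
    using four by (intro mult_left_mono power_mono) auto
  also have "\<dots> = exp (c * real k / 2)"
    using Suc by (simp flip: exp_of_nat_mult exp_add add: field_simps)
  finally show ?thesis .
qed

lemma quadratic_le_pow2: "5 \<le> k \<Longrightarrow> 5 * (2 * k ^ 2 + k + 1) \<le> 9 * (2::nat) ^ k"
proof (induction k rule: dec_induct)
  case base
  then show ?case
    by simp
next
  case (step k)
  have "5 * k \<le> k * k"
    using step.hyps(1) by (rule mult_le_mono1)
  then have "20 * k + 15 \<le> 5 * (2 * k ^ 2 + k + 1)"
    using step.hyps(1) unfolding power2_eq_square by arith
  moreover have "5 * (2 * Suc k ^ 2 + Suc k + 1) = 5 * (2 * k ^ 2 + k + 1) + (20 * k + 15)"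
    by (simp add: power2_eq_square algebra_simps)
  ultimately show ?case
    using step.IH by simp
qed

lemma nat_floor_bounds:
  fixes x :: real
  assumes "0 \<le> x"
  shows "x - 1 \<le> real (nat \<lfloor>x\<rfloor>)" "real (nat \<lfloor>x\<rfloor>) \<le> x"
  using assms of_nat_floor[OF assms] by linarith+

section \<open>Horn clauses and minimal models\<close>

lemma horn_clauses_eq:
  "horn_clauses n = (insert None (Some ` {1..n}) \<times> Pow {1..n}) - {(None, {})}"
  unfolding horn_clauses_def by auto

lemma finite_horn_clauses [simp]: "finite (horn_clauses n)"
  unfolding horn_clauses_eq by simp

lemma card_horn_clauses: "card (horn_clauses n) = (n + 1) * 2 ^ n - 1"
proof -
  have "card (insert None (Some ` {1..n})) = n + 1"
    by (subst card_insert_disjoint) (auto simp: card_image)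
  then show ?thesis
    unfolding horn_clauses_eq by (simp add: card_cartesian_product card_Pow)
qed

lemma card_horn_clauses_bounds:
  "real n * 2 ^ n \<le> real (card (horn_clauses n))"
  "real (card (horn_clauses n)) \<le> (real n + 1) * 2 ^ n"
proof -
  have "n * 2 ^ n < (n + 1) * 2 ^ n"
    by simp
  then have "real (n * 2 ^ n) \<le> real (card (horn_clauses n))"
    "real (card (horn_clauses n)) \<le> real ((n + 1) * 2 ^ n)"
    unfolding of_nat_le_iff card_horn_clauses by linarith+
  then show "real n * 2 ^ n \<le> real (card (horn_clauses n))"
    "real (card (horn_clauses n)) \<le> (real n + 1) * 2 ^ n"
    by (simp_all add: distrib_right)
qed

lemma finite_horn_formulas [simp]: "finite (horn_formulas n m)"
  unfolding horn_formulas_def using finite_lists_length_eq[OF finite_horn_clauses]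
  by (simp add: conj_commute)

lemma card_horn_formulas: "card (horn_formulas n m) = card (horn_clauses n) ^ m"
  unfolding horn_formulas_def using card_lists_length_eq[OF finite_horn_clauses]
  by (simp add: conj_commute)

lemma satisfiable_imp_supported_model:
  assumes "formula_satisfiable n cs"
  obtains M where "M \<subseteq> {1..n}" "\<forall>C\<in>set cs. clause_sat M C"
    "\<forall>i\<in>M. \<exists>S\<subseteq>M - {i}. (Some i, S) \<in> set cs"
proof -
  let ?model = "\<lambda>A. A \<subseteq> {1..n} \<and> (\<forall>C\<in>set cs. clause_sat A C)"
  obtain A where "?model A"
    using assms unfolding formula_satisfiable_def by blast
  then obtain M where M: "?model M" and least: "\<And>B. ?model B \<Longrightarrow> card M \<le> card B"
    using ex_has_least_nat[of ?model A card] by blast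
  have "\<exists>S\<subseteq>M - {i}. (Some i, S) \<in> set cs" if "i \<in> M" for i
  proof -
    have "finite M"
      using M finite_subset by blast
    with that have "\<not> ?model (M - {i})"
      using least by (meson card_Diff1_less leD)
    then obtain P S where C: "(P, S) \<in> set cs" and "\<not> clause_sat (M - {i}) (P, S)"
      using M by auto
    moreover have "clause_sat M (P, S)"
      using M C by blast
    ultimately show ?thesis
      unfolding clause_sat_def by auto
  qed
  with M that show ?thesis
    by blast
qed

definition sat_clauses :: "nat \<Rightarrow> nat set \<Rightarrow> horn_clause set" where
  "sat_clauses n M = {C \<in> horn_clauses n. clause_sat M C}"

definition support_clauses :: "nat set \<Rightarrow> horn_clause set" where
  "support_clauses M = {(Some i, S) | i S. i \<in> M \<and> S \<subseteq> M - {i}}"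

text \<open>A set M of k true variables falsifies the (n - k) 2^k clauses x_j or not S with j not in M
  and S a subset of M, and the 2^k - 1 purely negative clauses with nonempty S a subset of M.\<close>

definition num_falsified :: "nat \<Rightarrow> nat \<Rightarrow> nat" where
  "num_falsified n k = (n - k) * 2 ^ k + (2 ^ k - 1)"

lemma card_falsified_clauses:
  assumes M: "M \<subseteq> {1..n}"
  shows "card (horn_clauses n - sat_clauses n M) = num_falsified n (card M)"
proof -
  have fin: "finite M"
    using M finite_subset by blast
  define F1 :: "horn_clause set" where "F1 = (\<lambda>(j, S). (Some j, S)) ` (({1..n} - M) \<times> Pow M)"
  define F2 :: "horn_clause set" where "F2 = Pair None ` (Pow M - {{}})"
  have falsified: "horn_clauses n - sat_clauses n M = F1 \<union> F2"
    using M unfolding sat_clauses_def horn_clauses_def clause_sat_def F1_def F2_def by auto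
  have "card F1 = (n - card M) * 2 ^ card M"
    unfolding F1_def using M fin
    by (subst card_image) (auto simp: inj_on_def card_cartesian_product card_Pow card_Diff_subset)
  moreover have "card F2 = 2 ^ card M - 1"
    unfolding F2_def using fin by (subst card_image) (auto simp: inj_on_def card_Pow)
  moreover have "F1 \<inter> F2 = {}"
    unfolding F1_def F2_def by auto
  moreover have "finite F1" "finite F2"
    unfolding F1_def F2_def using fin by simp_all
  ultimately show ?thesis
    unfolding falsified num_falsified_def by (simp add: card_Un_disjoint)
qed

lemma card_sat_clauses:
  assumes "M \<subseteq> {1..n}"
  shows "card (sat_clauses n M) = card (horn_clauses n) - num_falsified n (card M)"
proof -
  have "sat_clauses n M \<subseteq> horn_clauses n"
    unfolding sat_clauses_def by blast
  then have "card (sat_clauses n M) \<le> card (horn_clauses n)"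
    "card (horn_clauses n - sat_clauses n M) = card (horn_clauses n) - card (sat_clauses n M)"
    by (simp_all add: card_mono card_Diff_subset finite_subset)
  then show ?thesis
    using card_falsified_clauses[OF assms] by linarith
qed

lemma num_falsified_le_card:
  assumes "k \<le> n"
  shows "num_falsified n k \<le> card (horn_clauses n)"
proof -
  have "num_falsified n k = card (horn_clauses n - sat_clauses n {1..k})"
    using assms card_falsified_clauses[of "{1..k}" n] by simp
  also have "\<dots> \<le> card (horn_clauses n)"
    by (rule card_mono) auto
  finally show ?thesis .
qed

lemma num_falsified_ge_half:
  assumes "1 \<le> k" "2 * k \<le> n"
  shows "(n + 1) * 2 ^ k \<le> 2 * num_falsified n k"
proof -
  obtain d where n: "n = 2 * k + d"
    using assms(2) by (metis le_add_diff_inverse)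
  have "2 ^ 1 \<le> (2::nat) ^ k"
    using assms(1) by (intro power_increasing) auto
  then show ?thesis
    unfolding num_falsified_def n by (simp add: algebra_simps)
qed

lemma card_support_clauses:
  assumes "finite M"
  shows "card (support_clauses M) = card M * 2 ^ (card M - 1)"
proof -
  have "support_clauses M = (\<lambda>(i, S). (Some i, S)) ` (SIGMA i:M. Pow (M - {i}))"
    unfolding support_clauses_def by auto
  then have "card (support_clauses M) = (\<Sum>i\<in>M. card (Pow (M - {i})))"
    using assms by (simp add: card_image inj_on_def)
  also have "\<dots> = (\<Sum>i\<in>M. 2 ^ (card M - 1))"
    using assms by (intro sum.cong) (simp_all add: card_Pow)
  finally show ?thesis
    by simp
qed

lemma support_clauses_subset: "M \<subseteq> {1..n} \<Longrightarrow> support_clauses M \<subseteq> sat_clauses n M"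
  unfolding support_clauses_def sat_clauses_def horn_clauses_def clause_sat_def by auto

definition supported_formulas :: "nat \<Rightarrow> nat \<Rightarrow> nat set \<Rightarrow> horn_clause list set" where
  "supported_formulas n m M = {cs. length cs = m \<and> set cs \<subseteq> sat_clauses n M
     \<and> (\<forall>i\<in>M. \<exists>C\<in>set cs. C \<in> support_clauses M \<and> the (fst C) = i)}"

lemma satisfiable_subset_supported_formulas:
  "{cs \<in> horn_formulas n m. formula_satisfiable n cs} \<subseteq> (\<Union>M\<in>Pow {1..n}. supported_formulas n m M)"
proof
  fix cs assume "cs \<in> {cs \<in> horn_formulas n m. formula_satisfiable n cs}"
  then have cs: "length cs = m" "set cs \<subseteq> horn_clauses n" and sat: "formula_satisfiable n cs"
    unfolding horn_formulas_def by auto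
  obtain M where M: "M \<subseteq> {1..n}" "\<forall>C\<in>set cs. clause_sat M C"
    and supported: "\<forall>i\<in>M. \<exists>S\<subseteq>M - {i}. (Some i, S) \<in> set cs"
    using sat by (rule satisfiable_imp_supported_model)
  have "set cs \<subseteq> sat_clauses n M"
    using cs(2) M(2) unfolding sat_clauses_def by blast
  moreover have "\<exists>C\<in>set cs. C \<in> support_clauses M \<and> the (fst C) = i" if i: "i \<in> M" for i
  proof -
    obtain S where "S \<subseteq> M - {i}" "(Some i, S) \<in> set cs"
      using supported i by blast
    then show ?thesis
      using i unfolding support_clauses_def by (intro bexI[where x = "(Some i, S)"]) auto
  qed
  ultimately have "cs \<in> supported_formulas n m M"
    unfolding supported_formulas_def using cs(1) by blast
  with M(1) show "cs \<in> (\<Union>M\<in>Pow {1..n}. supported_formulas n m M)"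
    by blast
qed

lemma card_supported_formulas_le:
  assumes M: "M \<subseteq> {1..n}"
  shows "card (supported_formulas n m M) \<le> (m choose card M) * (card M * 2 ^ (card M - 1)) ^ card M
           * (card (horn_clauses n) - num_falsified n (card M)) ^ (m - card M)"
proof -
  have "finite M"
    using M finite_subset by blast
  moreover have "finite (sat_clauses n M)"
    unfolding sat_clauses_def by simp
  ultimately have "card (supported_formulas n m M) \<le> (m choose card M) * card (support_clauses M) ^ card M
                                   * card (sat_clauses n M) ^ (m - card M)"
    unfolding supported_formulas_def
    by (intro card_lists_covering_le finite_subset[OF support_clauses_subset[OF M]])
  then show ?thesis
    using M \<open>finite M\<close> by (simp add: card_support_clauses card_sat_clauses)
qed

lemma card_satisfiable_le:
  "card {cs \<in> horn_formulas n m. formula_satisfiable n cs}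
     \<le> (\<Sum>k\<le>n. (n choose k) * ((m choose k) * (k * 2 ^ (k - 1)) ^ k
                   * (card (horn_clauses n) - num_falsified n k) ^ (m - k)))"
proof -
  define bound where "bound k = (m choose k) * (k * 2 ^ (k - 1)) ^ k
                                  * (card (horn_clauses n) - num_falsified n k) ^ (m - k)" for k
  have "finite (supported_formulas n m M)" for M
    by (rule finite_subset[OF _ finite_horn_formulas[of n m]])
      (auto simp: supported_formulas_def horn_formulas_def sat_clauses_def)
  then have "card {cs \<in> horn_formulas n m. formula_satisfiable n cs}
               \<le> card (\<Union>M\<in>Pow {1..n}. supported_formulas n m M)"
    using satisfiable_subset_supported_formulas by (intro card_mono) auto
  also have "\<dots> \<le> (\<Sum>M\<in>Pow {1..n}. card (supported_formulas n m M))"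
    by (rule card_UN_le) simp
  also have "\<dots> \<le> (\<Sum>M\<in>Pow {1..n}. bound (card M))"
    unfolding bound_def using card_supported_formulas_le by (intro sum_mono) simp
  also have "\<dots> = (\<Sum>k\<le>n. (n choose k) * bound k)"
    using sum_Pow_card[of "{1..n}" bound] by simp
  finally show ?thesis
    unfolding bound_def .
qed

lemma card_satisfiable_ge:
  "(card (horn_clauses n) - n) ^ m \<le> card {cs \<in> horn_formulas n m. formula_satisfiable n cs}"
proof -
  define units :: "horn_clause set" where "units = (\<lambda>i. (Some i, {})) ` {1..n}"
  have units: "units \<subseteq> horn_clauses n" "card units = n"
    unfolding units_def horn_clauses_def by (auto simp: card_image inj_on_def)
  have "clause_sat {} C" if "C \<in> horn_clauses n - units" for C
    using that unfolding horn_clauses_def units_def clause_sat_def by auto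
  then have "{cs. set cs \<subseteq> horn_clauses n - units \<and> length cs = m}
               \<subseteq> {cs \<in> horn_formulas n m. formula_satisfiable n cs}"
    unfolding horn_formulas_def formula_satisfiable_def by blast
  then have "card {cs. set cs \<subseteq> horn_clauses n - units \<and> length cs = m}
               \<le> card {cs \<in> horn_formulas n m. formula_satisfiable n cs}"
    by (intro card_mono) simp_all
  moreover have "card (horn_clauses n - units) = card (horn_clauses n) - n"
    using units by (simp add: card_Diff_subset finite_subset)
  ultimately show ?thesis
    by (simp add: card_lists_length_eq)
qed

lemma prob_sat_le_one: "prob_sat n m \<le> 1"
proof -
  have "card {cs \<in> horn_formulas n m. formula_satisfiable n cs} \<le> card (horn_formulas n m)"
    by (rule card_mono) auto
  then show ?thesis
    unfolding prob_sat_def by (simp add: divide_le_eq_1 card_gt_0_iff)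
qed

lemma prob_sat_le_sum:
  fixes n m :: nat
  defines "N \<equiv> real (card (horn_clauses n))"
  shows "prob_sat n m \<le> (\<Sum>k\<le>n. real (n choose k) * real (m choose k) * (real k * 2 ^ (k - 1)) ^ k
                                   * (N - real (num_falsified n k)) ^ (m - k) / N ^ m)"
proof -
  have "real (card {cs \<in> horn_formulas n m. formula_satisfiable n cs})
          \<le> real (\<Sum>k\<le>n. (n choose k) * ((m choose k) * (k * 2 ^ (k - 1)) ^ k
                   * (card (horn_clauses n) - num_falsified n k) ^ (m - k)))"
    by (simp only: of_nat_le_iff card_satisfiable_le)
  also have "\<dots> = (\<Sum>k\<le>n. real (n choose k) * real (m choose k) * (real k * 2 ^ (k - 1)) ^ k
                     * (N - real (num_falsified n k)) ^ (m - k))"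
    by (simp add: N_def num_falsified_le_card of_nat_diff mult.assoc)
  finally have "real (card {cs \<in> horn_formulas n m. formula_satisfiable n cs}) / N ^ m
                 \<le> (\<Sum>k\<le>n. real (n choose k) * real (m choose k) * (real k * 2 ^ (k - 1)) ^ k
                        * (N - real (num_falsified n k)) ^ (m - k)) / N ^ m"
    by (rule divide_right_mono) (simp add: N_def)
  then show ?thesis
    unfolding prob_sat_def card_horn_formulas N_def by (simp add: sum_divide_distrib)
qed

lemma prob_sat_ge_power:
  fixes n m :: nat
  defines "N \<equiv> real (card (horn_clauses n))"
  shows "((N - real n) / N) ^ m \<le> prob_sat n m"
proof -
  have "real n \<le> N"
    using num_falsified_le_card[of 0 n] by (simp add: N_def num_falsified_def)
  moreover have "real ((card (horn_clauses n) - n) ^ m)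
                   \<le> real (card {cs \<in> horn_formulas n m. formula_satisfiable n cs})"
    by (simp only: of_nat_le_iff card_satisfiable_ge)
  ultimately have "(N - real n) ^ m \<le> real (card {cs \<in> horn_formulas n m. formula_satisfiable n cs})"
    by (simp add: N_def of_nat_diff)
  then have "(N - real n) ^ m / N ^ m
               \<le> real (card {cs \<in> horn_formulas n m. formula_satisfiable n cs}) / N ^ m"
    by (rule divide_right_mono) (simp add: N_def)
  then show ?thesis
    unfolding prob_sat_def card_horn_formulas N_def by (simp add: power_divide)
qed

section \<open>Upper bound\<close>

text \<open>The constants are chosen so that, together with (m - k) / |H_n| \<ge> 9 c / (10 (n + 1)),
  the exponent b_k (m - k) / |H_n| is at least c (2 k^2 + k + 1) / 4.\<close>

lemma eventually_num_falsified_ge: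
  "\<forall>\<^sub>F n in sequentially. \<forall>k\<le>n. 5 * (n + 1) * (2 * k ^ 2 + k + 1) \<le> 18 * num_falsified n k"
proof -
  have "\<forall>\<^sub>F k in sequentially. 10 * real k * (2 * real k ^ 2 + real k + 1) + 18 \<le> 18 * 2 ^ k"
    by real_asymp
  then obtain K where K: "\<And>k. K \<le> k \<Longrightarrow> 10 * real k * (2 * real k ^ 2 + real k + 1) + 18 \<le> 18 * 2 ^ k"
    unfolding eventually_sequentially by blast
  show ?thesis
    using eventually_ge_at_top[of "max 13 (2 * K)"]
  proof eventually_elim
    case (elim n)
    show ?case
    proof (intro allI impI)
      fix k assume "k \<le> n"
      consider "k \<le> 4" | "5 \<le> k" "2 * k \<le> n" | "n < 2 * k"
        by linarith
      then show "5 * (n + 1) * (2 * k ^ 2 + k + 1) \<le> 18 * num_falsified n k"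
      proof cases
        case 1
        then have "k \<in> {0, 1, 2, 3, 4}"
          by auto
        with elim show ?thesis
          by (auto simp: num_falsified_def)
      next
        case 2
        then have "(n + 1) * 2 ^ k \<le> 2 * num_falsified n k"
          by (intro num_falsified_ge_half) auto
        moreover have "5 * (n + 1) * (2 * k ^ 2 + k + 1) \<le> (n + 1) * (9 * 2 ^ k)"
          using mult_le_mono2[OF quadratic_le_pow2[OF 2(1)], of "n + 1"] by (simp only: ac_simps)
        ultimately show ?thesis
          by linarith
      next
        case 3
        then have "K \<le> k" "n + 1 \<le> 2 * k"
          using elim by linarith+
        then have "5 * (real n + 1) \<le> 10 * real k"
          using of_nat_mono[OF \<open>n + 1 \<le> 2 * k\<close>, where 'a = real] by simp
        have "real (5 * (n + 1) * (2 * k ^ 2 + k + 1)) = 5 * (real n + 1) * (2 * real k ^ 2 + real k + 1)"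
          by (simp add: algebra_simps)
        also have "\<dots> \<le> 10 * real k * (2 * real k ^ 2 + real k + 1)"
          using \<open>5 * (real n + 1) \<le> 10 * real k\<close> by (rule mult_right_mono) simp
        also have "\<dots> \<le> real (18 * (2 ^ k - 1))"
          using K[OF \<open>K \<le> k\<close>] by (simp add: of_nat_diff)
        finally have "5 * (n + 1) * (2 * k ^ 2 + k + 1) \<le> 18 * (2 ^ k - 1)"
          by (simp only: of_nat_le_iff)
        then show ?thesis
          unfolding num_falsified_def by simp
      qed
    qed
  qed
qed

lemma num_falsified_exponent_ge:
  fixes c N :: real
  assumes c: "0 < c" and k: "k \<le> n" and n: "10 * (real n + 1) \<le> c * 2 ^ n"
    and falsified: "5 * (n + 1) * (2 * k ^ 2 + k + 1) \<le> 18 * num_falsified n k"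
    and m: "c * 2 ^ n - 1 \<le> real m"
    and N: "0 < N" "N \<le> (real n + 1) * 2 ^ n"
  shows "c * (2 * real k ^ 2 + real k + 1) / 4 \<le> real (num_falsified n k) * (real m - real k) / N"
proof -
  have "9 / 10 * c * 2 ^ n \<le> real m - real k"
    using m n k by simp
  moreover have "0 \<le> 9 / 10 * c * 2 ^ n"
    using c by simp
  ultimately have "9 / 10 * c * 2 ^ n / ((real n + 1) * 2 ^ n) \<le> (real m - real k) / N"
    using N by (intro frac_le) auto
  then have rate: "9 / 10 * c / (real n + 1) \<le> (real m - real k) / N"
    by simp
  define P where "P = 2 * real k ^ 2 + real k + 1"
  define b where "b = real (num_falsified n k)"
  have "5 * (real n + 1) * P \<le> 18 * b"
    using of_nat_mono[OF falsified, where 'a = real]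
    unfolding P_def b_def by (simp add: algebra_simps)
  then have "5 * (real n + 1) * P / (20 * (real n + 1)) \<le> 18 * b / (20 * (real n + 1))"
    by (rule divide_right_mono) simp
  moreover have "5 * (real n + 1) * P / (20 * (real n + 1)) = P / 4"
    "18 * b / (20 * (real n + 1)) = b * (9 / 10 / (real n + 1))"
    by (simp_all add: field_simps)
  ultimately have "P / 4 \<le> b * (9 / 10 / (real n + 1))"
    by simp
  then have "c * (P / 4) \<le> c * (b * (9 / 10 / (real n + 1)))"
    using c by (intro mult_left_mono) auto
  then have "c * (2 * real k ^ 2 + real k + 1) / 4 \<le> real (num_falsified n k) * (9 / 10 * c / (real n + 1))"
    unfolding P_def b_def by (simp add: ac_simps)
  also have "\<dots> \<le> real (num_falsified n k) * ((real m - real k) / N)"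
    using rate by (intro mult_left_mono) auto
  finally show ?thesis
    by simp
qed

lemma prob_sat_le_geometric:
  fixes c :: real
  assumes four: "4 \<le> exp (c / 2)" and c: "0 < c"
    and n: "1 \<le> n" "10 * (real n + 1) \<le> c * 2 ^ n"
    and falsified: "\<forall>k\<le>n. 5 * (n + 1) * (2 * k ^ 2 + k + 1) \<le> 18 * num_falsified n k"
    and m: "c * 2 ^ n - 1 \<le> real m" "real m \<le> c * 2 ^ n"
  shows "prob_sat n m \<le> exp (- c / 4) / (1 - exp (- c / 4))"
proof -
  define N where "N = real (card (horn_clauses n))"
  define x where "x = exp (- c / 4)"
  have N: "real n * 2 ^ n \<le> N" "N \<le> (real n + 1) * 2 ^ n"
    unfolding N_def by (rule card_horn_clauses_bounds)+
  have "0 < real n * 2 ^ n"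
    using n(1) by simp
  then have N_pos: "0 < N"
    using N(1) by linarith
  have nm: "real n * real m \<le> c * N"
  proof -
    have "real n * real m \<le> real n * (c * 2 ^ n)"
      using m(2) by (intro mult_left_mono) auto
    also have "\<dots> \<le> c * N"
      using N(1) c by (simp add: mult.left_commute)
    finally show ?thesis .
  qed
  have summand_le: "real (n choose k) * real (m choose k) * (real k * 2 ^ (k - 1)) ^ k
                * (N - real (num_falsified n k)) ^ (m - k) / N ^ m \<le> x ^ (k + 1)"
    if k: "k \<le> n" for k
  proof -
    have "real n \<le> real m"
      using m(1) n(2) by simp
    then have "real (n choose k) * real (m choose k) * (real k * 2 ^ (k - 1)) ^ k
                 * (N - real (num_falsified n k)) ^ (m - k) / N ^ m
               \<le> (c * (real k * 2 ^ (k - 1))) ^ k * exp (- (real (num_falsified n k) * (real m - real k) / N))"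
      using k N_pos nm num_falsified_le_card[OF k]
      by (intro binomial_term_le) (simp_all add: N_def)
    also have "\<dots> \<le> exp (c * real k / 2) ^ k * exp (- (c * (2 * real k ^ 2 + real k + 1) / 4))"
      using mult_power2_le_exp[OF four, of k] c
        num_falsified_exponent_ge[OF c k n(2) falsified[rule_format, OF k] m(1) N_pos N(2)]
      by (intro mult_mono power_mono) (simp_all add: mult.assoc)
    also have "\<dots> = x ^ (k + 1)"
      unfolding x_def by (simp flip: exp_of_nat_mult exp_add add: field_simps power2_eq_square)
    finally show ?thesis .
  qed
  have x: "0 < x" "x < 1"
    unfolding x_def using c by simp_all
  have "prob_sat n m \<le> (\<Sum>k\<le>n. real (n choose k) * real (m choose k) * (real k * 2 ^ (k - 1)) ^ k
                              * (N - real (num_falsified n k)) ^ (m - k) / N ^ m)"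
    unfolding N_def by (rule prob_sat_le_sum)
  also have "\<dots> \<le> (\<Sum>k\<le>n. x ^ (k + 1))"
    using summand_le by (intro sum_mono) simp
  also have "\<dots> \<le> x / (1 - x)"
    using x by (intro sum_power_Suc_le) auto
  finally show ?thesis
    unfolding x_def .
qed

lemma eventually_prob_sat_le:
  fixes c :: real
  assumes c: "0 < c"
  shows "\<forall>\<^sub>F n in sequentially. prob_sat n (nat \<lfloor>c * 2 ^ n\<rfloor>) \<le> exp (- c / 4) / (1 - exp (- c / 4))"
proof (cases "4 \<le> exp (c / 2)")
  case False
  have "exp (c / 4) ^ 2 = exp (c / 2)"
    by (simp flip: exp_of_nat_mult)
  with False have "exp (c / 4) ^ 2 < 2 ^ 2"
    by simp
  then have "exp (c / 4) < 2"
    by (rule power_less_imp_less_base) simp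
  then have "1 / 2 < exp (- c / 4)"
    by (simp add: exp_minus field_simps)
  moreover have "exp (- c / 4) < 1"
    using c by simp
  ultimately have "1 \<le> exp (- c / 4) / (1 - exp (- c / 4))"
    by (simp add: le_divide_eq)
  then show ?thesis
    by (intro always_eventually allI order_trans[OF prob_sat_le_one])
next
  case True
  have "\<forall>\<^sub>F n in sequentially. 10 * (real n + 1) \<le> c * 2 ^ n"
    using c by real_asymp
  then show ?thesis
    using eventually_ge_at_top[of 1] eventually_num_falsified_ge
  proof eventually_elim
    case (elim n)
    have "0 \<le> c * 2 ^ n"
      using c by simp
    with True c elim(2,1,3) show ?case
      by (intro prob_sat_le_geometric nat_floor_bounds)
  qed
qed

section \<open>Lower bound\<close>

lemma prob_sat_ge_exp:
  fixes c :: real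
  assumes n: "1 \<le> n" and c: "0 \<le> c" and m: "real m \<le> c * 2 ^ n"
  shows "exp (- c / (1 - 1 / 2 ^ n)) \<le> prob_sat n m"
proof -
  define N where "N = real (card (horn_clauses n))"
  define y where "y = real n / N"
  have N: "real n * 2 ^ n \<le> N"
    unfolding N_def by (rule card_horn_clauses_bounds)
  have "0 < real n * 2 ^ n"
    using n by simp
  then have N_pos: "0 < N"
    using N by linarith
  have y0: "0 \<le> y"
    unfolding y_def using N_pos by simp
  have y_le: "y \<le> 1 / 2 ^ n"
    unfolding y_def using N N_pos n by (simp add: divide_simps mult.commute)
  have "(2::real) ^ 1 \<le> 2 ^ n"
    using n by (intro power_increasing) auto
  then have half: "1 / 2 ^ n \<le> (1 / 2 :: real)"
    by (simp add: divide_simps)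
  have my: "real m * y \<le> c"
  proof -
    have "real m * y \<le> c * 2 ^ n * y"
      using m y0 by (rule mult_right_mono)
    also have "\<dots> \<le> c * 2 ^ n * (1 / 2 ^ n)"
      using y_le c by (intro mult_left_mono) auto
    finally show ?thesis
      by simp
  qed
  have "1 + y / (1 - y) \<le> exp (y / (1 - y))"
    by (rule exp_ge_add_one_self)
  then have base: "exp (- (y / (1 - y))) \<le> 1 - y"
    using y_le half by (simp add: exp_minus field_simps)
  have "real m * y / (1 - y) \<le> c / (1 - 1 / 2 ^ n)"
    using my y_le half c by (intro frac_le) auto
  then have "exp (- c / (1 - 1 / 2 ^ n)) \<le> exp (- (real m * y / (1 - y)))"
    by simp
  also have "\<dots> = exp (- (y / (1 - y))) ^ m"
    by (simp flip: exp_of_nat_mult)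
  also have "\<dots> \<le> (1 - y) ^ m"
    using base by (intro power_mono) auto
  also have "1 - y = (N - real n) / N"
    unfolding y_def using N_pos by (simp add: field_simps)
  also have "((N - real n) / N) ^ m \<le> prob_sat n m"
    unfolding N_def by (rule prob_sat_ge_power)
  finally show ?thesis .
qed

lemma eventually_prob_sat_ge:
  fixes c \<epsilon> :: real
  assumes c: "0 < c" and \<epsilon>: "0 < \<epsilon>"
  shows "\<forall>\<^sub>F n in sequentially. exp (- c) - \<epsilon> \<le> prob_sat n (nat \<lfloor>c * 2 ^ n\<rfloor>)"
proof -
  have "(\<lambda>n. exp (- c / (1 - 1 / 2 ^ n))) \<longlonglongrightarrow> exp (- c)"
    by real_asymp
  then have "\<forall>\<^sub>F n in sequentially. exp (- c) - \<epsilon> < exp (- c / (1 - 1 / 2 ^ n))"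
    using \<epsilon> by (intro order_tendstoD) auto
  then show ?thesis
    using eventually_ge_at_top[of 1]
  proof eventually_elim
    case (elim n)
    have "0 \<le> c * 2 ^ n"
      using c by simp
    then have "exp (- c / (1 - 1 / 2 ^ n)) \<le> prob_sat n (nat \<lfloor>c * 2 ^ n\<rfloor>)"
      using elim(2) c by (intro prob_sat_ge_exp nat_floor_bounds) auto
    with elim show ?case
      by linarith
  qed
qed

theorem mainTheorem9:
  fixes c :: real
  assumes "c > 0"
  shows "\<forall>\<epsilon>>0. \<forall>\<^sub>F n in sequentially.
           exp (- c) - \<epsilon> \<le> prob_sat n (nat \<lfloor>c * 2 ^ n\<rfloor>) \<and>
           prob_sat n (nat \<lfloor>c * 2 ^ n\<rfloor>) \<le> exp (- c / 4) / (1 - exp (- c / 4)) + \<epsilon>"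
proof (intro allI impI)
  fix \<epsilon> :: real
  assume "\<epsilon> > 0"
  with assms have "\<forall>\<^sub>F n in sequentially. exp (- c) - \<epsilon> \<le> prob_sat n (nat \<lfloor>c * 2 ^ n\<rfloor>)"
    by (rule eventually_prob_sat_ge)
  moreover have "\<forall>\<^sub>F n in sequentially.
                   prob_sat n (nat \<lfloor>c * 2 ^ n\<rfloor>) \<le> exp (- c / 4) / (1 - exp (- c / 4))"
    using assms by (rule eventually_prob_sat_le)
  ultimately show "\<forall>\<^sub>F n in sequentially.
           exp (- c) - \<epsilon> \<le> prob_sat n (nat \<lfloor>c * 2 ^ n\<rfloor>) \<and>
           prob_sat n (nat \<lfloor>c * 2 ^ n\<rfloor>) \<le> exp (- c / 4) / (1 - exp (- c / 4)) + \<epsilon>"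
    by eventually_elim (use \<open>\<epsilon> > 0\<close> in auto)
qed

end
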